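(* Let $r\ge 3$ and $n\ge\frac{(r-1)(2r+1)}{2}$, and let $\mathcal{H}$ be an $n$-vertex $\mathrm{T}_r$-free $r$-graph with $\delta_{r-1}^{+}(\mathcal{H})>\frac{2n}{2r+1}$. Let $V_1,\ldots,V_r\subseteq V(\mathcal{H})$ be pairwise disjoint sets, each independent in $\mathcal{H}$, with $|V_i|>\frac{2n}{2r+1}$ for all $i\in[r]$, and let $Z=V(\mathcal{H})\setminus(V_1\cup\cdots\cup V_r)$. Let $v\in Z$ and, for $i\in[r]$, let $$L_i=\{e\in L_{\mathcal{H}}(v)\colon |e\cap V_j|=1\text{ for every } j\in[r]\setminus\{i\}\}.$$ Then at most one of the sets $L_1,\ldots,L_r$ is nonempty.
   Context: An $r$-graph $\mathcal{H}$ is a collection of $r$-subsets (edges) of a finite vertex set $V(\mathcal{H})$. The shadow is $\partial\mathcal{H}=\{e\in\binom{V(\mathcal{H})}{r-1}\colon e\subseteq E \text{ for some } E\in\mathcal{H}\}$. For $e\in\partial\mathcal{H}$, $N_{\mathcal{H}}(e)=\{u\in V(\mathcal{H})\colon e\cup\{u\}\in\mathcal{H}\}$. The minimum positive codegree is $\delta_{r-1}^{+}(\mathcal{H})=\min\{|N_{\mathcal{H}}(e)|\colon e\in\partial\mathcal{H}\}$. The link of a vertex $v$ is $L_{\mathcal{H}}(v)=\{e\in\partial\mathcal{H}\colon e\cup\{v\}\in\mathcal{H}\}$. A set $I\subseteq V(\mathcal{H})$ is independent in $\mathcal{H}$ if every edge contains at most one vertex of $I$. The $r$-uniform generalized triangle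 is $\mathrm{T}_r=\{\{1,\ldots,r-1,r\},\{1,\ldots,r-1,r+1\},\{r,r+1,\ldots,2r-1\}\}$; $\mathcal{H}$ is $\mathrm{T}_r$-free if it contains no subhypergraph isomorphic to $\mathrm{T}_r$. *)

theory Defs
  imports Complex_Main
begin

definition is_rgraph :: "nat \<Rightarrow> 'a set \<Rightarrow> 'a set set \<Rightarrow> bool" where
  "is_rgraph r V H \<longleftrightarrow> finite V \<and> (\<forall>E\<in>H. E \<subseteq> V \<and> card E = r)"

definition shadow :: "nat \<Rightarrow> 'a set \<Rightarrow> 'a set set \<Rightarrow> 'a set set" where
  "shadow r V H = {e. e \<subseteq> V \<and> card e = r - 1 \<and> (\<exists>E\<in>H. e \<subseteq> E)}"

definition nbhd :: "'a set \<Rightarrow> 'a set set \<Rightarrow> 'a set \<Rightarrow> 'a set" where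
  "nbhd V H e = {u \<in> V. insert u e \<in> H}"

definition min_pos_codegree :: "nat \<Rightarrow> 'a set \<Rightarrow> 'a set set \<Rightarrow> nat" where
  "min_pos_codegree r V H = Min ((\<lambda>e. card (nbhd V H e)) ` shadow r V H)"

definition link :: "nat \<Rightarrow> 'a set \<Rightarrow> 'a set set \<Rightarrow> 'a \<Rightarrow> 'a set set" where
  "link r V H v = {e \<in> shadow r V H. insert v e \<in> H}"

definition independent :: "'a set set \<Rightarrow> 'a set \<Rightarrow> bool" where
  "independent H I \<longleftrightarrow> (\<forall>E\<in>H. card (E \<inter> I) \<le> 1)"

definition gen_triangle :: "nat \<Rightarrow> nat set set" where
  "gen_triangle r = {{1..r}, insert (r+1) {1..r-1}, {r..2*r-1}}"

definition Tr_free :: "nat \<Rightarrow> 'a set \<Rightarrow> 'a set set \<Rightarrow> bool" where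
  "Tr_free r V H \<longleftrightarrow> \<not> (\<exists>f. inj_on f {1..2*r-1} \<and> f ` {1..2*r-1} \<subseteq> V \<and>
      (\<forall>E\<in>gen_triangle r. f ` E \<in> H))"

end

theory Submission
  imports Defs
begin

text \<open>Put \<open>q = n/(2r+1)\<close>: every class \<open>V\<^sub>i\<close> and every positive codegree exceeds \<open>2q\<close>,
  while \<open>|Z| < q\<close>. By \<open>T\<^sub>r\<close>-freeness, if \<open>s \<union> {v}\<close> is an edge and \<open>D \<ni> v\<close> is an
  \<open>(r-1)\<close>-set disjoint from \<open>s\<close>, then \<open>N(s)\<close> and \<open>N(D)\<close> are disjoint. Take \<open>s \<in> L\<^sub>i\<close>,
  \<open>t \<in> L\<^sub>j\<close> with \<open>i \<noteq> j\<close> and \<open>|s \<inter> t|\<close> minimal. If they share \<open>w \<in> V\<^sub>k\<close>, every neighbour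
  of \<open>(s - w) + v\<close> other than \<open>w\<close>, the \<open>V\<^sub>i\<close>-vertex of \<open>t\<close> and the vertices of \<open>Z - v\<close> would
  replace \<open>w\<close> to give a member of \<open>L\<^sub>i\<close> or \<open>L\<^sub>k\<close> meeting \<open>t\<close> less, so that codegree is at
  most \<open>|Z| + 1 < 2q\<close>. If \<open>s\<close> and \<open>t\<close> are disjoint, let \<open>B = (t - t\<^sub>i) + v\<close>; \<open>N(B)\<close> cannot lie
  in \<open>V\<^sub>i \<union> Z\<close> together with the disjoint \<open>N(s)\<close>, so it contains some \<open>z \<in> V\<^sub>j\<close> and
  \<open>s' = (t - t\<^sub>i) + z \<in> L\<^sub>i\<close>. Then for \<open>C = (s - s\<^sub>j) + v\<close> the neighbourhoods \<open>N(C)\<close>, \<open>N(t)\<close>,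
  \<open>N(s')\<close> of total size \<open>> 6q\<close> fit into \<open>V\<^sub>i \<union> V\<^sub>j \<union> Z\<close> with only \<open>Z\<close> counted twice,
  which has size \<open>< 6q\<close>.\<close>

lemma rgraph_finite_edge:
  assumes "is_rgraph r V H" "E \<in> H"
  shows "finite E"
  using assms finite_subset by (auto simp: is_rgraph_def)

lemma rgraph_insert_notin:
  assumes "is_rgraph r V H" "r \<ge> 1" "insert x e \<in> H" "card e = r - 1"
  shows "x \<notin> e"
proof
  assume "x \<in> e"
  then have "insert x e = e" by blast
  with assms show False by (auto simp: is_rgraph_def)
qed

lemma nbhd_notin:
  assumes "is_rgraph r V H" "r \<ge> 1" "x \<in> nbhd V H e" "card e = r - 1"
  shows "x \<notin> e"
  using assms rgraph_insert_notin by (fastforce simp: nbhd_def)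

lemma shadow_intro:
  assumes "is_rgraph r V H" "E \<in> H" "e \<subseteq> E" "card e = r - 1"
  shows "e \<in> shadow r V H"
  using assms by (auto simp: shadow_def is_rgraph_def)

text \<open>The embedding of \<open>T\<^sub>r\<close>: \<open>1..r-1\<close> onto \<open>s\<close>, \<open>r \<mapsto> v\<close>, \<open>r+1 \<mapsto> c\<close>, and \<open>r+2..2r-1\<close>
  onto \<open>D - {v}\<close>.\<close>
lemma triangle_not_Tr_free:
  assumes r2: "r \<ge> 2" and rg: "is_rgraph r V H"
    and e1: "insert v s \<in> H" and e2: "insert c s \<in> H" and e3: "insert c D \<in> H"
    and cs: "card s = r - 1" and cD: "card D = r - 1" and vD: "v \<in> D" and sD: "s \<inter> D = {}"
  shows "\<not> Tr_free r V H"
proof -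
  have vs: "v \<notin> s" and cns: "c \<notin> s" and cnD: "c \<notin> D"
    using rgraph_insert_notin[OF rg] e1 e2 e3 cs cD r2 by auto
  have fs: "finite s" and fD: "finite D"
    using rgraph_finite_edge[OF rg e1] rgraph_finite_edge[OF rg e3] by auto
  have cD': "card (D - {v}) = r - 2" using cD vD fD by simp
  obtain g1 where g1: "bij_betw g1 {1..r-1} s" using ex_bij_betw_nat_finite_1[OF fs] cs by auto
  obtain g2 where g2: "bij_betw g2 {1..r-2} (D - {v})"
    using ex_bij_betw_nat_finite_1[of "D - {v}"] fD cD' by auto
  define f where "f x = (if x < r then g1 x else if x = r then v else if x = r + 1 then c
      else g2 (x - (r+1)))" for x
  have im1: "f ` {1..r-1} = s"
  proof -
    have "f ` {1..r-1} = g1 ` {1..r-1}" by (rule image_cong) (use r2 in \<open>auto simp: f_def\<close>)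
    thus ?thesis using g1 by (simp add: bij_betw_def)
  qed
  have im2: "f ` {r+2..2*r-1} = D - {v}"
  proof -
    have "1 + (r+1) = r+2" "(r-2) + (r+1) = 2*r-1" using r2 by auto
    then have "{r+2..2*r-1} = plus (r+1) ` {1..r-2}"
      by (simp only: image_add_atLeastAtMost)
    then have "f ` {r+2..2*r-1} = (\<lambda>y. f (y + (r+1))) ` {1..r-2}"
      by (simp add: image_image add.commute)
    also have "\<dots> = g2 ` {1..r-2}" by (rule image_cong) (auto simp: f_def)
    finally show ?thesis using g2 by (simp add: bij_betw_def)
  qed
  have fr: "f r = v" "f (r+1) = c" by (auto simp: f_def)
  have "{1..r} = insert r {1..r-1}" "{r..2*r-1} = insert r (insert (r+1) {r+2..2*r-1})"
    and dom: "{1..2*r-1} = insert r (insert (r+1) ({1..r-1} \<union> {r+2..2*r-1}))"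
    using r2 by auto
  then have edges: "f ` {1..r} = insert v s" "f ` insert (r+1) {1..r-1} = insert c s"
      "f ` {r..2*r-1} = insert c D"
    using im1 im2 fr vD by auto
  have img: "f ` {1..2*r-1} = insert v (insert c (s \<union> (D - {v})))"
    using im1 im2 fr dom by auto
  have "card (s \<union> (D - {v})) = (r - 1) + (r - 2)"
    using card_Un_disjoint[of s "D - {v}"] fs fD cs cD' sD by auto
  moreover have "v \<notin> s \<union> (D - {v})" "c \<notin> s \<union> (D - {v})" "c \<noteq> v"
    using vs cns cnD vD by auto
  ultimately have "card (f ` {1..2*r-1}) = 2 * r - 1"
    unfolding img using fs fD r2 by simp
  then have "inj_on f {1..2*r-1}" by (intro eq_card_imp_inj_on) auto
  moreover have "f ` {1..2*r-1} \<subseteq> V"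
    using img e1 e3 rg by (auto simp: is_rgraph_def)
  moreover have "\<forall>E\<in>gen_triangle r. f ` E \<in> H"
    using edges e1 e2 e3 by (auto simp: gen_triangle_def)
  ultimately show ?thesis unfolding Tr_free_def by blast
qed

lemma Tr_free_nbhd_disjoint:
  assumes "Tr_free r V H" "r \<ge> 2" "is_rgraph r V H"
    and "insert v s \<in> H" "card s = r - 1" "card D = r - 1" "v \<in> D" "s \<inter> D = {}"
  shows "nbhd V H s \<inter> nbhd V H D = {}"
  using assms triangle_not_Tr_free[of r V H v s _ D] by (auto simp: nbhd_def)

lemma card_uncovered_plus_lt:
  fixes Vs :: "nat \<Rightarrow> 'a set"
  assumes fin: "finite V"
    and sub: "\<forall>i\<in>{1..r}. Vs i \<subseteq> V"
    and disj: "\<forall>i\<in>{1..r}. \<forall>j\<in>{1..r}. i \<noteq> j \<longrightarrow> Vs i \<inter> Vs j = {}"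
    and big: "\<forall>i\<in>{1..r}. real (card (Vs i)) > 2 * real (card V) / real (2 * r + 1)"
    and J: "J \<subseteq> {1..r}" "J \<noteq> {1..r}"
  shows "real (card (V - (\<Union>i\<in>{1..r}. Vs i))) + (\<Sum>k\<in>J. real (card (Vs k)))
           < (2 * real (card J) + 1) * (real (card V) / real (2 * r + 1))"
proof -
  define q where "q = real (card V) / real (2 * r + 1)"
  define K where "K = {1..r} - J"
  have finVs: "finite (Vs k)" if "k \<in> {1..r}" for k
    using that sub fin finite_subset by blast
  have U: "(\<Union>i\<in>{1..r}. Vs i) \<subseteq> V" using sub by blast
  have "card V = card (V - (\<Union>i\<in>{1..r}. Vs i)) + card (\<Union>i\<in>{1..r}. Vs i)"
    using card_Diff_subset[OF finite_subset[OF U fin] U] card_mono[OF fin U] by linarith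
  also have "card (\<Union>i\<in>{1..r}. Vs i) = (\<Sum>k\<in>{1..r}. card (Vs k))"
    using finVs disj by (intro card_UN_disjoint) auto
  also have "(\<Sum>k\<in>{1..r}. card (Vs k)) = (\<Sum>k\<in>K. card (Vs k)) + (\<Sum>k\<in>J. card (Vs k))"
    using J(1) unfolding K_def by (intro sum.subset_diff) auto
  finally have "real (card V) = real (card (V - (\<Union>i\<in>{1..r}. Vs i)))
      + (\<Sum>k\<in>J. real (card (Vs k))) + (\<Sum>k\<in>K. real (card (Vs k)))"
    by (simp only: of_nat_add of_nat_sum ac_simps)
  moreover have "(\<Sum>k\<in>K. 2 * q) < (\<Sum>k\<in>K. real (card (Vs k)))"
    using big J unfolding K_def q_def by (intro sum_strict_mono) auto
  moreover have "real (card K) = real r - real (card J)"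
  proof -
    have "finite J" "card J \<le> r" using J(1) finite_subset card_mono[OF _ J(1)] by auto
    then show ?thesis using J(1) unfolding K_def by (simp add: card_Diff_subset of_nat_diff)
  qed
  moreover have "real (card V) = (2 * real r + 1) * q"
    unfolding q_def by (simp add: field_simps)
  ultimately show ?thesis unfolding q_def[symmetric] by (simp add: algebra_simps)
qed

lemma card_exchange_Int_less:
  assumes "finite A" "w \<in> A \<inter> B" "x \<notin> B"
  shows "card (insert x (A - {w}) \<inter> B) < card (A \<inter> B)"
proof -
  have "card (insert x (A - {w}) \<inter> B) \<le> card (A \<inter> B - {w})"
    using assms by (intro card_mono) auto
  also have "\<dots> < card (A \<inter> B)" using assms by (intro card_Diff1_less) auto
  finally show ?thesis .
qed

lemma card_le_of_covering:
  assumes fin: "finite X" "finite Y" "finite Z"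
    and disj: "X \<inter> Y = {}" "X \<inter> Z = {}" "Y \<inter> Z = {}"
    and cover: "A \<subseteq> X \<union> Y \<union> Z" "B \<subseteq> Y \<union> Z" "C \<subseteq> X \<union> Z"
    and AB: "A \<inter> B = {}" and AC: "A \<inter> C = {}"
  shows "card A + card B + card C \<le> card X + card Y + 2 * card Z"
proof -
  have finABC: "finite A" "finite B" "finite C"
    using cover fin by (auto intro: finite_subset)
  have "card A + card (B \<union> C) = card (A \<union> B \<union> C)"
    using AB AC finABC by (simp add: card_Un_disjoint Int_Un_distrib Un_assoc)
  also have "\<dots> \<le> card (X \<union> Y \<union> Z)"
    using cover fin by (intro card_mono) auto
  also have "\<dots> = card X + card Y + card Z"
    using fin disj by (simp add: card_Un_disjoint Int_Un_distrib2)
  finally have "card A + card (B \<union> C) \<le> card X + card Y + card Z" .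
  moreover have "card (B \<union> C) + card (B \<inter> C) = card B + card C"
    using finABC by (intro card_Un_Int [symmetric])
  moreover have "card (B \<inter> C) \<le> card Z"
    using cover disj fin by (intro card_mono) auto
  ultimately show ?thesis by linarith
qed

locale transversal_setting =
  fixes r :: nat and V :: "'a set" and H :: "'a set set"
    and Vs :: "nat \<Rightarrow> 'a set" and v :: 'a
  assumes r3: "r \<ge> 3"
    and rg: "is_rgraph r V H"
    and nbig: "real (card V) \<ge> real ((r - 1) * (2 * r + 1)) / 2"
    and free: "Tr_free r V H"
    and codeg: "real (min_pos_codegree r V H) > 2 * real (card V) / real (2 * r + 1)"
    and Vsub: "\<forall>i\<in>{1..r}. Vs i \<subseteq> V"
    and Vdisj: "\<forall>i\<in>{1..r}. \<forall>j\<in>{1..r}. i \<noteq> j \<longrightarrow> Vs i \<inter> Vs j = {}"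
    and Vind: "\<forall>i\<in>{1..r}. independent H (Vs i)"
    and Vcard: "\<forall>i\<in>{1..r}. real (card (Vs i)) > 2 * real (card V) / real (2 * r + 1)"
    and vZ: "v \<in> V - (\<Union>i\<in>{1..r}. Vs i)"
begin

abbreviation "Z \<equiv> V - (\<Union>i\<in>{1..r}. Vs i)"
abbreviation "N \<equiv> nbhd V H"

definition q :: real where "q = real (card V) / real (2 * r + 1)"

definition L :: "nat \<Rightarrow> 'a set set" where
  "L i = {e \<in> link r V H v. \<forall>k\<in>{1..r} - {i}. card (e \<inter> Vs k) = 1}"

lemma finite_V: "finite V"
  using rg by (simp add: is_rgraph_def)

lemma finite_Vs: "k \<in> {1..r} \<Longrightarrow> finite (Vs k)"
  using Vsub finite_V finite_subset by blast

lemma finite_nbhd: "finite (N D)"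
  using finite_V by (rule finite_subset[rotated]) (auto simp: nbhd_def)

lemma class_unique: "x \<in> Vs k \<Longrightarrow> x \<in> Vs l \<Longrightarrow> k \<in> {1..r} \<Longrightarrow> l \<in> {1..r} \<Longrightarrow> k = l"
  using Vdisj by blast

lemma edge_meets_class_once:
  assumes "E \<in> H" "k \<in> {1..r}" "x \<in> E \<inter> Vs k" "y \<in> E \<inter> Vs k"
  shows "x = y"
proof -
  have "card (E \<inter> Vs k) \<le> 1" using Vind assms(1,2) by (auto simp: independent_def)
  moreover have "finite (E \<inter> Vs k)" using rgraph_finite_edge[OF rg assms(1)] by simp
  ultimately show ?thesis using assms(3,4) by (auto simp: card_le_Suc0_iff_eq)
qed

lemma q_ge_1: "q \<ge> 1"
proof -
  have "real ((r - 1) * (2 * r + 1)) \<le> real (2 * card V)" using nbig by simp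
  then have "(r - 1) * (2 * r + 1) \<le> 2 * card V" by (simp only: of_nat_le_iff)
  moreover have "2 * (2 * r + 1) \<le> (r - 1) * (2 * r + 1)" using r3 by (intro mult_right_mono) auto
  ultimately have "2 * (2 * r + 1) \<le> 2 * card V" by (rule order_trans[rotated])
  then have "2 * r + 1 \<le> card V" by simp
  then show ?thesis unfolding q_def by simp
qed

lemma codegree_gt: "D \<in> shadow r V H \<Longrightarrow> real (card (N D)) > 2 * q"
proof -
  assume D: "D \<in> shadow r V H"
  have "finite (shadow r V H)"
    using finite_V by (rule finite_subset[rotated, OF finite_Pow_iff[THEN iffD2]]) (auto simp: shadow_def)
  then have "min_pos_codegree r V H \<le> card (N D)"
    unfolding min_pos_codegree_def using D by (intro Min_le) auto
  then show ?thesis using codeg unfolding q_def by linarith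
qed

lemma card_Z_plus_lt:
  assumes "J \<subseteq> {1..r}" "card J < r"
  shows "real (card Z) + (\<Sum>k\<in>J. real (card (Vs k))) < (2 * real (card J) + 1) * q"
proof -
  have "J \<noteq> {1..r}" using assms(2) by auto
  then show ?thesis
    unfolding q_def by (rule card_uncovered_plus_lt[OF finite_V Vsub Vdisj Vcard assms(1)])
qed

lemma card_Z_lt: "real (card Z) < q"
  using card_Z_plus_lt[of "{}"] r3 by auto

lemma L_memD:
  assumes "s \<in> L i"
  shows "insert v s \<in> H" "card s = r - 1" "s \<in> shadow r V H" "v \<notin> s" "finite s"
proof -
  show *: "insert v s \<in> H" "card s = r - 1" "s \<in> shadow r V H"
    using assms by (auto simp: L_def link_def shadow_def)
  show "v \<notin> s" using rgraph_insert_notin[OF rg] * r3 by simp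
  show "finite s" using rgraph_finite_edge[OF rg *(1)] by simp
qed

lemma L_subset:
  assumes s: "s \<in> L i" and i: "i \<in> {1..r}"
  shows "s \<subseteq> (\<Union>k\<in>{1..r} - {i}. Vs k)"
proof -
  let ?U = "\<Union>k\<in>{1..r} - {i}. s \<inter> Vs k"
  have "card ?U = (\<Sum>k\<in>{1..r} - {i}. card (s \<inter> Vs k))"
    using L_memD(5)[OF s] Vdisj by (intro card_UN_disjoint) auto
  also have "\<dots> = (\<Sum>k\<in>{1..r} - {i}. 1)" using s by (intro sum.cong) (auto simp: L_def)
  also have "\<dots> = card s" using i L_memD(2)[OF s] by simp
  finally have "?U = s" using L_memD(5)[OF s] by (intro card_subset_eq) auto
  then show ?thesis by blast
qed

lemma L_Int_own_class: "s \<in> L i \<Longrightarrow> i \<in> {1..r} \<Longrightarrow> s \<inter> Vs i = {}"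
  using L_subset class_unique by blast

lemma L_Int_class:
  assumes "s \<in> L i" "k \<in> {1..r}" "k \<noteq> i"
  obtains y where "s \<inter> Vs k = {y}"
proof -
  have "card (s \<inter> Vs k) = 1" using assms by (simp add: L_def)
  then show ?thesis using that by (auto simp: card_1_singleton_iff)
qed

lemma nbhd_L_subset:
  assumes s: "s \<in> L i" and i: "i \<in> {1..r}"
  shows "N s \<subseteq> Vs i \<union> Z"
proof
  fix x assume x: "x \<in> N s"
  have "x \<in> V" and E: "insert x s \<in> H" using x by (auto simp: nbhd_def)
  have "x \<notin> s" using nbhd_notin[OF rg _ x] L_memD(2)[OF s] r3 by simp
  show "x \<in> Vs i \<union> Z"
  proof (rule ccontr)
    assume "x \<notin> Vs i \<union> Z"
    then obtain k where k: "k \<in> {1..r}" "x \<in> Vs k" "k \<noteq> i" using \<open>x \<in> V\<close> by blast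
    obtain y where y: "s \<inter> Vs k = {y}" using L_Int_class[OF s k(1) k(3)] .
    have "x \<in> insert x s \<inter> Vs k" "y \<in> insert x s \<inter> Vs k" using k(2) y by auto
    then have "x = y" by (rule edge_meets_class_once[OF E k(1)])
    with y \<open>x \<notin> s\<close> show False by auto
  qed
qed

lemma nbhd_L_disjoint:
  assumes "s \<in> L i" "card D = r - 1" "v \<in> D" "s \<inter> D = {}"
  shows "N s \<inter> N D = {}"
  using Tr_free_nbhd_disjoint[OF free _ rg] L_memD[OF assms(1)] assms(2-) r3 by auto

lemma swap_in_shadow:
  assumes s: "s \<in> L i" and w: "w \<in> s"
  shows "insert v (s - {w}) \<in> shadow r V H" "card (insert v (s - {w})) = r - 1"
proof -
  show card: "card (insert v (s - {w})) = r - 1"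
    using L_memD[OF s] w r3 by simp
  show "insert v (s - {w}) \<in> shadow r V H"
    by (rule shadow_intro[OF rg L_memD(1)[OF s] _ card]) blast
qed

lemma swap_in_link:
  assumes s: "s \<in> L i" and w: "w \<in> s" and x: "x \<in> N (insert v (s - {w}))"
  shows "insert x (s - {w}) \<in> link r V H v"
proof -
  have E: "insert v (insert x (s - {w})) \<in> H"
    using x by (auto simp: nbhd_def insert_commute)
  have "x \<notin> insert v (s - {w})"
    using nbhd_notin[OF rg _ x swap_in_shadow(2)[OF s w]] r3 by simp
  then have "card (insert x (s - {w})) = r - 1"
    using L_memD[OF s] w r3 by simp
  then have "insert x (s - {w}) \<in> shadow r V H"
    by (rule shadow_intro[OF rg E, rotated]) blast
  then show ?thesis using E by (simp add: link_def)
qed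

lemma nbhd_swap_subset:
  assumes s: "s \<in> L i" and i: "i \<in> {1..r}" and k: "k \<in> {1..r}" "k \<noteq> i"
    and w: "w \<in> s \<inter> Vs k"
  shows "N (insert v (s - {w})) \<subseteq> Vs i \<union> Vs k \<union> Z"
proof
  fix x assume x: "x \<in> N (insert v (s - {w}))"
  show "x \<in> Vs i \<union> Vs k \<union> Z"
  proof (rule ccontr)
    assume out: "x \<notin> Vs i \<union> Vs k \<union> Z"
    moreover have "x \<in> V" using x by (simp add: nbhd_def)
    ultimately obtain l where "l \<in> {1..r}" "x \<in> Vs l" by blast
    with out have l: "l \<in> {1..r}" "x \<in> Vs l" "l \<noteq> i" "l \<noteq> k" by auto
    obtain y where y: "s \<inter> Vs l = {y}" using L_Int_class[OF s l(1) l(3)] .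
    then have "y \<in> insert v (s - {w})" using w k l class_unique by blast
    moreover have "insert x (insert v (s - {w})) \<in> H" using x by (simp add: nbhd_def)
    ultimately have "x = y" using edge_meets_class_once l y by blast
    moreover have "x \<notin> insert v (s - {w})"
      using nbhd_notin[OF rg _ x swap_in_shadow(2)[OF s w[THEN IntD1]]] r3 by simp
    ultimately show False using \<open>y \<in> insert v (s - {w})\<close> by simp
  qed
qed

lemma swap_same_class:
  assumes s: "s \<in> L i" and k: "k \<in> {1..r}" "k \<noteq> i"
    and w: "w \<in> s \<inter> Vs k" and x: "x \<in> N (insert v (s - {w}))" "x \<in> Vs k"
  shows "insert x (s - {w}) \<in> L i"
proof -
  obtain y where "s \<inter> Vs k = {y}" using L_Int_class[OF s k] .
  then have "s \<inter> Vs k = {w}" using w by auto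
  have "card (insert x (s - {w}) \<inter> Vs l) = 1" if l: "l \<in> {1..r} - {i}" for l
  proof (cases "l = k")
    case True
    then have "insert x (s - {w}) \<inter> Vs l = {x}" using \<open>s \<inter> Vs k = {w}\<close> x(2) by blast
    then show ?thesis by simp
  next
    case False
    then have "insert x (s - {w}) \<inter> Vs l = s \<inter> Vs l"
      using class_unique x(2) w k l by blast
    then show ?thesis using s l by (simp add: L_def)
  qed
  then show ?thesis using swap_in_link[OF s _ x(1)] w by (simp add: L_def)
qed

lemma swap_other_class:
  assumes s: "s \<in> L i" and i: "i \<in> {1..r}" and k: "k \<in> {1..r}"
    and w: "w \<in> s \<inter> Vs k" and x: "x \<in> N (insert v (s - {w}))" "x \<in> Vs i"
  shows "insert x (s - {w}) \<in> L k"
proof -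
  have "card (insert x (s - {w}) \<inter> Vs l) = 1" if l: "l \<in> {1..r} - {k}" for l
  proof (cases "l = i")
    case True
    then have "insert x (s - {w}) \<inter> Vs l = {x}" using L_Int_own_class[OF s i] x(2) by blast
    then show ?thesis by simp
  next
    case False
    then have "insert x (s - {w}) \<inter> Vs l = s \<inter> Vs l"
      using class_unique x(2) w i k l by blast
    then show ?thesis using s l False by (simp add: L_def)
  qed
  then show ?thesis using swap_in_link[OF s _ x(1)] w by (simp add: L_def)
qed

lemma L_descent:
  assumes i: "i \<in> {1..r}" and j: "j \<in> {1..r}" and ij: "i \<noteq> j"
    and s: "s \<in> L i" and t: "t \<in> L j" and w: "w \<in> s \<inter> t"
  shows "\<exists>i'\<in>{1..r}. i' \<noteq> j \<and> (\<exists>s'\<in>L i'. card (s' \<inter> t) < card (s \<inter> t))"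
proof (rule ccontr)
  assume no_smaller: "\<not> ?thesis"
  have "w \<in> (\<Union>k\<in>{1..r} - {i}. Vs k)" using L_subset[OF s i] w by auto
  then obtain k where "k \<in> {1..r} - {i}" "w \<in> Vs k" by (rule UN_E)
  then have k: "k \<in> {1..r}" "k \<noteq> i" "w \<in> Vs k" by auto
  have "k \<noteq> j" using L_Int_own_class[OF t j] w k(3) by blast
  obtain y where "t \<inter> Vs k = {y}" using L_Int_class[OF t k(1) \<open>k \<noteq> j\<close>] .
  then have tk: "t \<inter> Vs k = {w}" using w k(3) by auto
  obtain ti where ti: "t \<inter> Vs i = {ti}" using L_Int_class[OF t i ij] .
  define D where "D = insert v (s - {w})"
  have in_t: "x \<in> t" if "x \<in> N D" "insert x (s - {w}) \<in> L i'" "i' \<in> {1..r}" "i' \<noteq> j"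
    for x i'
  proof (rule ccontr)
    assume "x \<notin> t"
    then have "card (insert x (s - {w}) \<inter> t) < card (s \<inter> t)"
      by (rule card_exchange_Int_less[OF L_memD(5)[OF s] w])
    with that no_smaller show False by blast
  qed
  have "N D \<subseteq> insert w (insert ti (Z - {v}))"
  proof
    fix x assume x: "x \<in> N D"
    have "x \<notin> D"
      using nbhd_notin[OF rg _ x] swap_in_shadow(2)[OF s] w r3 unfolding D_def by auto
    have "N D \<subseteq> Vs i \<union> Vs k \<union> Z"
      unfolding D_def using nbhd_swap_subset[OF s i k(1,2)] w k(3) by blast
    with x consider "x \<in> Vs k" | "x \<in> Vs i" | "x \<in> Z" by blast
    then show "x \<in> insert w (insert ti (Z - {v}))"
    proof cases
      case 1
      have "insert x (s - {w}) \<in> L i"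
        using swap_same_class[OF s k(1,2) _ _ 1] x w k(3) unfolding D_def by blast
      then have "x \<in> t" using in_t[OF x _ i ij] by blast
      then show ?thesis using tk 1 by blast
    next
      case 2
      have "insert x (s - {w}) \<in> L k"
        using swap_other_class[OF s i k(1) _ _ 2] x w k(3) unfolding D_def by blast
      then have "x \<in> t" using in_t[OF x _ k(1) \<open>k \<noteq> j\<close>] by blast
      then show ?thesis using ti 2 by blast
    next
      case 3
      then show ?thesis using \<open>x \<notin> D\<close> unfolding D_def by blast
    qed
  qed
  then have "card (N D) \<le> card (insert w (insert ti (Z - {v})))"
    using finite_V by (intro card_mono) auto
  also have "\<dots> \<le> card (Z - {v}) + 2"
    using finite_V by (simp add: card_insert_if)
  also have "card (Z - {v}) + 2 = card Z + 1"
    using vZ finite_V card_gt_0_iff[of Z] by auto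
  finally have "real (card (N D)) \<le> real (card Z) + 1" by linarith
  moreover have "2 * q < real (card (N D))"
    using codegree_gt swap_in_shadow(1)[OF s] w unfolding D_def by blast
  ultimately show False using card_Z_lt q_ge_1 by linarith
qed

lemma L_Int_nonempty:
  assumes i: "i \<in> {1..r}" and j: "j \<in> {1..r}" and ij: "i \<noteq> j"
    and s: "s \<in> L i" and t: "t \<in> L j"
  shows "s \<inter> t \<noteq> {}"
proof
  assume st: "s \<inter> t = {}"
  obtain sj where sj: "s \<inter> Vs j = {sj}" using L_Int_class[OF s j ij [symmetric]] .
  obtain ti where ti: "t \<inter> Vs i = {ti}" using L_Int_class[OF t i ij] .
  define B where "B = insert v (t - {ti})"
  have B: "B \<in> shadow r V H" "card B = r - 1"
    using swap_in_shadow[OF t] ti unfolding B_def by auto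
  have "N s \<inter> N B = {}"
    using nbhd_L_disjoint[OF s B(2)] L_memD(4)[OF s] st unfolding B_def by blast
  have "N B \<inter> Vs j \<noteq> {}"
  proof
    assume "N B \<inter> Vs j = {}"
    then have "N B \<subseteq> Vs i \<union> Z"
      using nbhd_swap_subset[OF t j i ij] ti unfolding B_def by blast
    then have "card (N B) + card (N s) \<le> card (Vs i \<union> Z)"
      using nbhd_L_subset[OF s i] \<open>N s \<inter> N B = {}\<close> finite_V finite_Vs[OF i] finite_nbhd
      by (subst card_Un_disjoint [symmetric]) (auto intro!: card_mono)
    also have "\<dots> = card (Vs i) + card Z"
      using finite_V finite_Vs[OF i] i by (intro card_Un_disjoint) auto
    finally have "real (card (N B)) + real (card (N s)) \<le> real (card (Vs i)) + real (card Z)"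
      by linarith
    moreover have "real (card Z) + real (card (Vs i)) < 3 * q"
      using card_Z_plus_lt[of "{i}"] i r3 by simp
    ultimately show False
      using codegree_gt[OF B(1)] codegree_gt[OF L_memD(3)[OF s]] by linarith
  qed
  then obtain z where z: "z \<in> N B" "z \<in> Vs j" by blast
  define s' where "s' = insert z (t - {ti})"
  have s': "s' \<in> L i"
    using swap_other_class[OF t j i] ti z unfolding B_def s'_def by blast
  define C where "C = insert v (s - {sj})"
  have C: "C \<in> shadow r V H" "card C = r - 1"
    using swap_in_shadow[OF s] sj unfolding C_def by auto
  have "z \<notin> s - {sj}" "z \<noteq> v" using z(2) sj vZ j by auto
  then have "N C \<inter> N t = {}" "N C \<inter> N s' = {}"
    using nbhd_L_disjoint[OF t C(2)] nbhd_L_disjoint[OF s' C(2)] L_memD(4)[OF t] st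
    unfolding C_def s'_def by blast+
  moreover have "N C \<subseteq> Vs i \<union> Vs j \<union> Z"
    using nbhd_swap_subset[OF s i j ij [symmetric]] sj unfolding C_def by blast
  moreover have "Vs i \<inter> Vs j = {}" using Vdisj i j ij by blast
  ultimately have "card (N C) + card (N t) + card (N s') \<le> card (Vs i) + card (Vs j) + 2 * card Z"
    using finite_Vs[OF i] finite_Vs[OF j] finite_V nbhd_L_subset[OF t j] nbhd_L_subset[OF s' i] i j
    by (intro card_le_of_covering) auto
  then have "real (card (N C)) + real (card (N t)) + real (card (N s'))
      \<le> real (card (Vs i)) + real (card (Vs j)) + 2 * real (card Z)"
    by linarith
  moreover have "real (card Z) + (real (card (Vs i)) + real (card (Vs j))) < 5 * q"
    using card_Z_plus_lt[of "{i, j}"] i j ij r3 by simp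
  ultimately show False
    using codegree_gt[OF C(1)] codegree_gt[OF L_memD(3)[OF t]] codegree_gt[OF L_memD(3)[OF s']]
      card_Z_lt by linarith
qed

lemma L_unique:
  assumes i: "i \<in> {1..r}" and j: "j \<in> {1..r}" and s: "s \<in> L i" and t: "t \<in> L j"
  shows "i = j"
  using i s
proof (induction "card (s \<inter> t)" arbitrary: i s rule: less_induct)
  case less
  show ?case
  proof (rule ccontr)
    assume "i \<noteq> j"
    then obtain w where "w \<in> s \<inter> t" using L_Int_nonempty less.prems j t by blast
    then obtain i' s' where "i' \<in> {1..r}" "i' \<noteq> j" "s' \<in> L i'" "card (s' \<inter> t) < card (s \<inter> t)"
      using L_descent less.prems \<open>i \<noteq> j\<close> j t by blast
    then show False using less.hyps by blast
  qed
qed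

end

theorem claim2p5:
  fixes r :: nat and V :: "'a set" and H :: "'a set set"
    and Vs :: "nat \<Rightarrow> 'a set" and v :: 'a
  assumes r3: "r \<ge> 3"
    and rg: "is_rgraph r V H"
    and nbig: "real (card V) \<ge> real ((r - 1) * (2 * r + 1)) / 2"
    and free: "Tr_free r V H"
    and codeg: "real (min_pos_codegree r V H) > 2 * real (card V) / real (2 * r + 1)"
    and Vsub: "\<forall>i\<in>{1..r}. Vs i \<subseteq> V"
    and Vdisj: "\<forall>i\<in>{1..r}. \<forall>j\<in>{1..r}. i \<noteq> j \<longrightarrow> Vs i \<inter> Vs j = {}"
    and Vind: "\<forall>i\<in>{1..r}. independent H (Vs i)"
    and Vcard: "\<forall>i\<in>{1..r}. real (card (Vs i)) > 2 * real (card V) / real (2 * r + 1)"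
    and vZ: "v \<in> V - (\<Union>i\<in>{1..r}. Vs i)"
  shows "\<forall>i\<in>{1..r}. \<forall>j\<in>{1..r}.
     {e \<in> link r V H v. \<forall>k\<in>{1..r} - {i}. card (e \<inter> Vs k) = 1} \<noteq> {} \<and>
     {e \<in> link r V H v. \<forall>k\<in>{1..r} - {j}. card (e \<inter> Vs k) = 1} \<noteq> {} \<longrightarrow> i = j"
proof -
  interpret transversal_setting r V H Vs v
    using assms by unfold_locales
  show ?thesis using L_unique unfolding L_def by blast
qed

end
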